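(* Let $H, N, d_h$ be positive integers and $d = H d_h$. Fix a layer $l$ and, for each head $h \in \{1,\dots,H\}$, let $q_h \in \mathbb{R}^{1\times d_h}$, $K_{l,h} \in \mathbb{R}^{N\times d_h}$ and $V_{l,h}\in\mathbb{R}^{N\times d_h}$. Let $W_l^O \in \mathbb{R}^{d\times d}$. Define the attention weights $A^N_{l,h} = \mathrm{Softmax}\!\left(q_h K_{l,h}^T/\sqrt{d_h}\right)\in\mathbb{R}^{1\times N}$. For each $h$ let $\mathcal{I}_{l,h}\in\{0,1\}^N$ be a mask with $\mathcal{I}_{l,h}[i]=1$ for at least one $i$, and define the masked attention weights $$\hat{A}^N_{l,h} = \frac{A^N_{l,h}\odot \mathcal{I}_{l,h}}{\|A^N_{l,h}\odot \mathcal{I}_{l,h}\|_1},$$ where $\odot$ is the entrywise product. Let $$y^N_l = \mathrm{Cat}_{h\in[H]}\big(A^N_{l,h}V_{l,h}\big)\,W_l^O,\qquad \hat{y}^N_l = \mathrm{Cat}_{h\in[H]}\big(\hat{A}^N_{l,h}V_{l,h}\big)\,W_l^O,$$ where $\mathrm{Cat}$ concatenates the $H$ row vectors of length $d_h$ into a row vector of length $d$. Then $$\|y^N_l-\hat{y}^N_l\|_1 \le 2\hat{C}\sum_{h\in[H]}\sum_{i\in[N]} A^N_{l,h}[i]\,\bar{V}_{l,h}\,\big(1-\mathcal{I}_{l,h}[i]\big),$$ where $\hat{C} = \|(W_l^O)^T\|_1$ is the induced matrix $1$-norm of $(W_l^O)^T$ (the largest absolute column sum of $(W_l^O)^T$),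 and $\bar{V}_{l,h} = \max_{k\in[N]}\|V_{l,h}[k]\|_1$, with $V_{l,h}[k]$ the $k$-th row of $V_{l,h}$.
   Context: This models the attention output of one Transformer layer at decoding step $N$ with $H$ heads, before and after evicting key–value cache entries: $\mathcal{I}_{l,h}[i]=1$ means the $i$-th cached key/value of head $h$ is retained and $0$ means it is evicted; evicting entries is equivalent to setting the corresponding pre-softmax logits to $-\infty$, which yields the renormalized weights $\hat{A}^N_{l,h}$. Vector norms $\|\cdot\|_1$ are the usual $\ell_1$ norms; $[N]=\{1,\dots,N\}$. *)

theory Defs
  imports "HOL-Analysis.Analysis"
begin

text \<open>Conventions: all indices are 0-based natural numbers with explicit bounds.
  Head h < H, cache position i < N, head coordinate j < dh, model coordinate c < H*dh.
  q h j: query of head h; K h i j, V h i j: i-th cached key/value row of head h;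
  W c c': output projection W^O (d x d); Imask h i \<in> {0,1}: retention mask.\<close>

definition softmax_attn :: "nat \<Rightarrow> nat \<Rightarrow> (nat \<Rightarrow> nat \<Rightarrow> real) \<Rightarrow> (nat \<Rightarrow> nat \<Rightarrow> nat \<Rightarrow> real)
    \<Rightarrow> nat \<Rightarrow> nat \<Rightarrow> real" where
  "softmax_attn N dh q K h i =
     exp ((\<Sum>j<dh. q h j * K h i j) / sqrt (real dh)) /
     (\<Sum>k<N. exp ((\<Sum>j<dh. q h j * K h k j) / sqrt (real dh)))"

definition masked_attn :: "nat \<Rightarrow> (nat \<Rightarrow> nat \<Rightarrow> real) \<Rightarrow> (nat \<Rightarrow> nat \<Rightarrow> real)
    \<Rightarrow> nat \<Rightarrow> nat \<Rightarrow> real" where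
  "masked_attn N A Imask h i =
     (A h i * Imask h i) / (\<Sum>k<N. \<bar>A h k * Imask h k\<bar>)"

text \<open>Row vector Cat_h (A_h V_h): coordinate c = h*dh + j.\<close>
definition cat_heads :: "nat \<Rightarrow> nat \<Rightarrow> (nat \<Rightarrow> nat \<Rightarrow> real) \<Rightarrow> (nat \<Rightarrow> nat \<Rightarrow> nat \<Rightarrow> real)
    \<Rightarrow> nat \<Rightarrow> real" where
  "cat_heads N dh A V c = (\<Sum>i<N. A (c div dh) i * V (c div dh) i (c mod dh))"

definition attn_output :: "nat \<Rightarrow> nat \<Rightarrow> nat \<Rightarrow> (nat \<Rightarrow> nat \<Rightarrow> real) \<Rightarrow> (nat \<Rightarrow> nat \<Rightarrow> nat \<Rightarrow> real)
    \<Rightarrow> (nat \<Rightarrow> nat \<Rightarrow> real) \<Rightarrow> nat \<Rightarrow> real" where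
  "attn_output H N dh A V W c' = (\<Sum>c<H*dh. cat_heads N dh A V c * W c c')"

text \<open>Induced 1-norm of W^T: max absolute column sum of W^T = max absolute row sum of W.\<close>
definition norm1_transpose :: "nat \<Rightarrow> (nat \<Rightarrow> nat \<Rightarrow> real) \<Rightarrow> real" where
  "norm1_transpose d W = Max ((\<lambda>c. \<Sum>c'<d. \<bar>W c c'\<bar>) ` {..<d})"

definition Vbar :: "nat \<Rightarrow> nat \<Rightarrow> (nat \<Rightarrow> nat \<Rightarrow> nat \<Rightarrow> real) \<Rightarrow> nat \<Rightarrow> real" where
  "Vbar N dh V h = Max ((\<lambda>k. \<Sum>j<dh. \<bar>V h k j\<bar>) ` {..<N})"

end

theory Submission
  imports Defs
begin

text \<open>Since y and yhat are obtained from the attention weights by the same linear map,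
  their distance is controlled by the l1 distance of the weights: the output projection
  costs at most the largest absolute row sum of W, and each head at most the largest
  l1 norm of a value row. Per head, renormalising a probability vector after deleting
  the mass m of the evicted entries moves it by exactly 2m in l1 (m is lost on the
  evicted entries and m is redistributed over the retained ones).\<close>

lemma sum_abs_vector_matrix_mult_le:
  fixes x :: "'i \<Rightarrow> real" and M :: "'i \<Rightarrow> 'j \<Rightarrow> real"
  assumes row_bound: "\<And>i. i \<in> I \<Longrightarrow> (\<Sum>j\<in>J. \<bar>M i j\<bar>) \<le> B"
  shows "(\<Sum>j\<in>J. \<bar>\<Sum>i\<in>I. x i * M i j\<bar>) \<le> B * (\<Sum>i\<in>I. \<bar>x i\<bar>)"
proof -
  have "(\<Sum>j\<in>J. \<bar>\<Sum>i\<in>I. x i * M i j\<bar>) \<le> (\<Sum>j\<in>J. \<Sum>i\<in>I. \<bar>x i\<bar> * \<bar>M i j\<bar>)"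
    by (intro sum_mono order_trans[OF sum_abs]) (simp add: abs_mult)
  also have "\<dots> = (\<Sum>i\<in>I. \<bar>x i\<bar> * (\<Sum>j\<in>J. \<bar>M i j\<bar>))"
    by (subst sum.swap) (simp add: sum_distrib_left)
  also have "\<dots> \<le> (\<Sum>i\<in>I. \<bar>x i\<bar> * B)"
    by (intro sum_mono mult_left_mono row_bound) auto
  finally show ?thesis
    by (simp add: sum_distrib_left mult.commute)
qed

lemma sum_lessThan_mult_div_mod:
  fixes f :: "nat \<Rightarrow> nat \<Rightarrow> 'a::comm_monoid_add"
  shows "(\<Sum>c<H*dh. f (c div dh) (c mod dh)) = (\<Sum>h<H. \<Sum>j<dh. f h j)"
  unfolding sum_mult_product by (intro sum.cong refl) simp

lemma row_sum_le_norm1_transpose: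
  assumes "c < d"
  shows "(\<Sum>c'<d. \<bar>W c c'\<bar>) \<le> norm1_transpose d W"
  unfolding norm1_transpose_def using assms by (intro Max_ge) auto

lemma norm1_transpose_nonneg:
  assumes "0 < d"
  shows "0 \<le> norm1_transpose d W"
  using row_sum_le_norm1_transpose[OF assms, of W]
  by (rule order_trans[rotated]) (simp add: sum_nonneg)

lemma row_norm_le_Vbar:
  assumes "i < N"
  shows "(\<Sum>j<dh. \<bar>V h i j\<bar>) \<le> Vbar N dh V h"
  unfolding Vbar_def using assms by (intro Max_ge) auto

lemma softmax_attn_pos:
  assumes "0 < N"
  shows "0 < softmax_attn N dh q K h i"
  unfolding softmax_attn_def using assms by (intro divide_pos_pos sum_pos) auto

lemma sum_softmax_attn:
  assumes "0 < N"
  shows "(\<Sum>i<N. softmax_attn N dh q K h i) = 1"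
proof -
  have "(\<Sum>k<N. exp ((\<Sum>j<dh. q h j * K h k j) / sqrt (real dh))) > 0"
    using assms by (intro sum_pos) auto
  then show ?thesis
    unfolding softmax_attn_def by (simp add: sum_divide_distrib[symmetric])
qed

lemma sum_abs_diff_renormalized_mask:
  fixes a I :: "nat \<Rightarrow> real"
  assumes nonneg: "\<And>i. i < N \<Longrightarrow> 0 \<le> a i" and sum_one: "(\<Sum>i<N. a i) = 1"
    and mask: "\<And>i. i < N \<Longrightarrow> I i \<in> {0, 1}"
    and retained_pos: "0 < (\<Sum>i<N. a i * I i)"
  shows "(\<Sum>i<N. \<bar>a i - a i * I i / (\<Sum>k<N. \<bar>a k * I k\<bar>)\<bar>) = 2 * (\<Sum>i<N. a i * (1 - I i))"
proof -
  define S where "S = (\<Sum>k<N. a k * I k)"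
  have masked_term: "0 \<le> a k * I k \<and> a k * I k \<le> a k" if "k < N" for k
    using nonneg[OF that] mask[OF that] by auto
  then have S_eq: "(\<Sum>k<N. \<bar>a k * I k\<bar>) = S"
    unfolding S_def by simp
  have "S \<le> (\<Sum>k<N. a k)"
    unfolding S_def using masked_term by (intro sum_mono) auto
  then have inv_S: "1 \<le> 1 / S"
    using retained_pos sum_one by (simp add: S_def)
  have term_eq: "\<bar>a i - a i * I i / S\<bar> = a i * (1 - I i) + a i * I i * (1 / S - 1)"
    if "i < N" for i
  proof -
    have "a i \<le> a i / S"
      using mult_left_mono[OF inv_S nonneg[OF that]] by simp
    moreover have "I i = 0 \<or> I i = 1"
      using mask[OF that] by simp
    ultimately show ?thesis
      using nonneg[OF that] by (auto simp: right_diff_distrib)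
  qed
  have "(\<Sum>i<N. \<bar>a i - a i * I i / (\<Sum>k<N. \<bar>a k * I k\<bar>)\<bar>)
      = (\<Sum>i<N. a i * (1 - I i) + a i * I i * (1 / S - 1))"
    unfolding S_eq by (intro sum.cong) (simp_all add: term_eq)
  also have "\<dots> = (\<Sum>i<N. a i * (1 - I i)) + S * (1 / S - 1)"
    by (simp add: sum.distrib sum_distrib_right S_def)
  also have "S * (1 / S - 1) = (\<Sum>i<N. a i * (1 - I i))"
    using retained_pos sum_one
    by (simp add: S_def right_diff_distrib sum_subtractf)
  finally show ?thesis by simp
qed

lemma sum_abs_diff_masked_softmax_attn:
  fixes dh :: nat and q :: "nat \<Rightarrow> nat \<Rightarrow> real" and K :: "nat \<Rightarrow> nat \<Rightarrow> nat \<Rightarrow> real"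
  assumes "0 < N" and mask: "\<forall>i<N. Imask h i \<in> {0, 1}" and "\<exists>i<N. Imask h i = 1"
  defines "A \<equiv> softmax_attn N dh q K"
  shows "(\<Sum>i<N. \<bar>A h i - masked_attn N A Imask h i\<bar>) = 2 * (\<Sum>i<N. A h i * (1 - Imask h i))"
proof -
  obtain i0 where "i0 < N" "Imask h i0 = 1"
    using assms(3) by auto
  have A_pos: "0 < A h i" for i
    unfolding A_def using assms(1) by (rule softmax_attn_pos)
  have "0 \<le> A h i * Imask h i" if "i < N" for i
    using A_pos[of i] mask that by auto
  with \<open>i0 < N\<close> \<open>Imask h i0 = 1\<close> have "0 < (\<Sum>i<N. A h i * Imask h i)"
    by (intro sum_pos2[of _ i0]) (simp_all add: A_pos)
  moreover have "(\<Sum>i<N. A h i) = 1"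
    unfolding A_def using assms(1) by (rule sum_softmax_attn)
  ultimately show ?thesis
    unfolding masked_attn_def
    using A_pos mask by (intro sum_abs_diff_renormalized_mask) (auto intro: less_imp_le)
qed

lemma attn_output_diff:
  "attn_output H N dh A V W c' - attn_output H N dh B V W c'
     = attn_output H N dh (\<lambda>h i. A h i - B h i) V W c'"
  unfolding attn_output_def cat_heads_def
  by (simp add: sum_subtractf left_diff_distrib)

lemma sum_abs_attn_output_le:
  "(\<Sum>c'<H*dh. \<bar>attn_output H N dh D V W c'\<bar>)
     \<le> norm1_transpose (H*dh) W * (\<Sum>c<H*dh. \<bar>cat_heads N dh D V c\<bar>)"
  unfolding attn_output_def
  by (intro sum_abs_vector_matrix_mult_le row_sum_le_norm1_transpose) auto

lemma sum_abs_cat_heads_le: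
  "(\<Sum>c<H*dh. \<bar>cat_heads N dh D V c\<bar>) \<le> (\<Sum>h<H. Vbar N dh V h * (\<Sum>i<N. \<bar>D h i\<bar>))"
proof -
  have "(\<Sum>c<H*dh. \<bar>cat_heads N dh D V c\<bar>) = (\<Sum>h<H. \<Sum>j<dh. \<bar>\<Sum>i<N. D h i * V h i j\<bar>)"
    unfolding cat_heads_def
    using sum_lessThan_mult_div_mod[where f = "\<lambda>h j. \<bar>\<Sum>i<N. D h i * V h i j\<bar>"] by simp
  also have "\<dots> \<le> (\<Sum>h<H. Vbar N dh V h * (\<Sum>i<N. \<bar>D h i\<bar>))"
    by (intro sum_mono sum_abs_vector_matrix_mult_le row_norm_le_Vbar) auto
  finally show ?thesis .
qed

theorem theorem1:
  fixes H N dh :: nat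
    and q :: "nat \<Rightarrow> nat \<Rightarrow> real"
    and K V :: "nat \<Rightarrow> nat \<Rightarrow> nat \<Rightarrow> real"
    and W :: "nat \<Rightarrow> nat \<Rightarrow> real"
    and Imask :: "nat \<Rightarrow> nat \<Rightarrow> real"
  assumes "0 < H" and "0 < N" and "0 < dh"
    and "\<forall>h<H. \<forall>i<N. Imask h i \<in> {0, 1}"
    and "\<forall>h<H. \<exists>i<N. Imask h i = 1"
  shows "(let A = softmax_attn N dh q K;
              Ahat = masked_attn N A Imask;
              y = attn_output H N dh A V W;
              yhat = attn_output H N dh Ahat V W
          in (\<Sum>c<H*dh. \<bar>y c - yhat c\<bar>)
             \<le> 2 * norm1_transpose (H*dh) W *
               (\<Sum>h<H. \<Sum>i<N. A h i * Vbar N dh V h * (1 - Imask h i)))"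
proof -
  define A where "A = softmax_attn N dh q K"
  define C where "C = norm1_transpose (H*dh) W"
  define D where "D h i = A h i - masked_attn N A Imask h i" for h i
  have "(\<Sum>c<H*dh. \<bar>attn_output H N dh A V W c - attn_output H N dh (masked_attn N A Imask) V W c\<bar>)
      = (\<Sum>c<H*dh. \<bar>attn_output H N dh D V W c\<bar>)"
    unfolding attn_output_diff D_def ..
  also have "\<dots> \<le> C * (\<Sum>c<H*dh. \<bar>cat_heads N dh D V c\<bar>)"
    unfolding C_def by (rule sum_abs_attn_output_le)
  also have "\<dots> \<le> C * (\<Sum>h<H. Vbar N dh V h * (\<Sum>i<N. \<bar>D h i\<bar>))"
    using assms(1,3) unfolding C_def
    by (intro mult_left_mono sum_abs_cat_heads_le norm1_transpose_nonneg) simp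
  also have "\<dots> = 2 * C * (\<Sum>h<H. \<Sum>i<N. A h i * Vbar N dh V h * (1 - Imask h i))"
    using assms(2,4,5)
    by (simp add: D_def A_def sum_abs_diff_masked_softmax_attn sum_distrib_left mult_ac)
  finally show ?thesis
    unfolding Let_def A_def[symmetric] C_def[symmetric] .
qed

end
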